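(* For every positive integer $d$, the $d$-Young reducibility digraph $\mathfrak G_d$ contains no directed cycle. Consequently, for every $n$, the subdigraph $\mathfrak G_{d,n}$ contains no directed cycle.
   Context: A Ferrers diagram is a finite $\mathcal D\subseteq\{1,2,\dots\}^2$ such that $(x,y)\in\mathcal D$ implies $(i,j)\in\mathcal D$ for all $1\le i\le x$, $1\le j\le y$ (first coordinate = row); it has order $n$ if $\mathcal D\subseteq\{1,\dots,n\}^2$. With column heights $c_i=|\mathcal D\cap(\mathbb N\times\{i\})|$, $\nu_j(\mathcal D,d)=\sum_{i\ge j+1}\max\{0,c_i-d+j\}$ for $0\le j\le d-1$ and $\nu_{\min}(\mathcal D,d)=\min_j\nu_j(\mathcal D,d)$. A point $P\in\mathcal D$ is removable if $\mathcal D\setminus\{P\}$ is a Ferrers diagram. For $\mathcal D'=\mathcal D\setminus\{P\}$ with $P$ removable, write $\mathcal D'\xrightarrow{d}\mathcal D$ if $\nu_{\min}(\mathcal D',d)=\nu_{\min}(\mathcal D,d)$ and $\mathcal D\xrightarrow{d}\mathcal D'$ otherwise. The $d$-Young digraph $\mathfrak G_d$ has vertex set the set of all Ferrers diagrams (including $\emptyset$) and a directed edge $(\mathcal D,\mathcal D')$ iff $\mathcal D\xrightarrow{d}\mathcal D'$. $\mathfrak G_{d,n}$ is the subdigraph induced on the Ferrers diagrams of order $n$. *)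

theory Defs
  imports Main
begin

text \<open>Ferrers diagrams: finite subsets of {1,2,...}^2 (first coordinate = row),
  closed downwards in both coordinates.\<close>
definition ferrers :: "(nat \<times> nat) set \<Rightarrow> bool" where
  "ferrers D \<longleftrightarrow> finite D \<and> (\<forall>(x,y)\<in>D. 1 \<le> x \<and> 1 \<le> y) \<and>
     (\<forall>x y i j. (x,y) \<in> D \<longrightarrow> 1 \<le> i \<longrightarrow> i \<le> x \<longrightarrow> 1 \<le> j \<longrightarrow> j \<le> y \<longrightarrow> (i,j) \<in> D)"

definition ferrers_order :: "nat \<Rightarrow> (nat \<times> nat) set \<Rightarrow> bool" where
  "ferrers_order n D \<longleftrightarrow> ferrers D \<and> D \<subseteq> {1..n} \<times> {1..n}"

definition col_height :: "(nat \<times> nat) set \<Rightarrow> nat \<Rightarrow> nat" where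
  "col_height D i = card {x. (x,i) \<in> D}"

text \<open>nu_j(D,d) = sum over i \<ge> j+1 of max{0, c_i - d + j}.  Columns i with c_i = 0
  contribute max{0, j - d} = 0 (as j \<le> d-1), so the sum is taken over the finitely many
  nonempty columns i > j.\<close>
definition nu :: "(nat \<times> nat) set \<Rightarrow> nat \<Rightarrow> nat \<Rightarrow> int" where
  "nu D d j = (\<Sum>i\<in>{i. j + 1 \<le> i \<and> i \<in> snd ` D}.
       max 0 (int (col_height D i) - int d + int j))"

definition nu_min :: "(nat \<times> nat) set \<Rightarrow> nat \<Rightarrow> int" where
  "nu_min D d = Min ((\<lambda>j. nu D d j) ` {0..<d})"

definition removable :: "(nat \<times> nat) set \<Rightarrow> nat \<times> nat \<Rightarrow> bool" where
  "removable D P \<longleftrightarrow> P \<in> D \<and> ferrers (D - {P})"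

definition young_arrow :: "nat \<Rightarrow> (nat \<times> nat) set \<Rightarrow> (nat \<times> nat) set \<Rightarrow> bool" where
  "young_arrow d D D' \<longleftrightarrow>
     (\<exists>P. removable D P \<and> D' = D - {P} \<and> nu_min D' d \<noteq> nu_min D d) \<or>
     (\<exists>P. removable D' P \<and> D = D' - {P} \<and> nu_min D d = nu_min D' d)"

definition young_digraph :: "nat \<Rightarrow> ((nat \<times> nat) set \<times> (nat \<times> nat) set) set" where
  "young_digraph d = {(D, D'). ferrers D \<and> ferrers D' \<and> young_arrow d D D'}"

definition young_digraph_n :: "nat \<Rightarrow> nat \<Rightarrow> ((nat \<times> nat) set \<times> (nat \<times> nat) set) set" where
  "young_digraph_n d n = {(D, D'). ferrers_order n D \<and> ferrers_order n D' \<and> young_arrow d D D'}"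

end

theory Submission
  imports Defs
begin

text \<open>Since \<open>nu_min\<close> is monotone under inclusion of diagrams, an edge that deletes a point
  and changes \<open>nu_min\<close> strictly decreases it, while an edge that adds a point keeps \<open>nu_min\<close>
  and increases the number of points. So every edge strictly decreases the pair
  (\<open>nu_min\<close>, minus the cardinality) lexicographically, and no directed cycle can close up.\<close>

lemma col_height_mono:
  assumes "finite D" "D' \<subseteq> D"
  shows "col_height D' i \<le> col_height D i"
proof -
  have "{x. (x, i) \<in> D} \<subseteq> fst ` D" by force
  then have "finite {x. (x, i) \<in> D}" using assms(1) finite_subset by blast
  then show ?thesis
    unfolding col_height_def by (rule card_mono) (use assms(2) in auto)
qed

lemma nu_mono:
  assumes "finite D" "D' \<subseteq> D"
  shows "nu D' d j \<le> nu D d j"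
proof -
  let ?cols = "\<lambda>D. {i. j + 1 \<le> i \<and> i \<in> snd ` D}"
  let ?term = "\<lambda>D i. max 0 (int (col_height D i) - int d + int j)"
  have "nu D' d j = sum (?term D') (?cols D')" unfolding nu_def ..
  also have "\<dots> \<le> sum (?term D) (?cols D')"
    using col_height_mono[OF assms] by (intro sum_mono max.mono) simp_all
  also have "\<dots> \<le> sum (?term D) (?cols D)"
    using assms by (intro sum_mono2) auto
  also have "\<dots> = nu D d j" unfolding nu_def ..
  finally show ?thesis .
qed

lemma nu_min_mono:
  assumes "finite D" "D' \<subseteq> D" "0 < d"
  shows "nu_min D' d \<le> nu_min D d"
proof -
  obtain j where "j < d" and j_min: "nu_min D d = nu D d j"
    unfolding nu_min_def using Min_in[of "(\<lambda>j. nu D d j) ` {0..<d}"] assms(3) by fastforce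
  then have "nu_min D' d \<le> nu D' d j" unfolding nu_min_def by (intro Min_le) auto
  also have "\<dots> \<le> nu D d j" using assms(1,2) by (rule nu_mono)
  finally show ?thesis using j_min by simp
qed

definition nu_min_card_lex :: "nat \<Rightarrow> ((nat \<times> nat) set \<times> (nat \<times> nat) set) set" where
  "nu_min_card_lex d = {(D, D'). nu_min D' d < nu_min D d \<or>
                          (nu_min D' d = nu_min D d \<and> card D < card D')}"

lemma acyclic_nu_min_card_lex: "acyclic (nu_min_card_lex d)"
proof -
  have "trans (nu_min_card_lex d)" unfolding trans_def nu_min_card_lex_def by auto
  moreover have "irrefl (nu_min_card_lex d)" unfolding irrefl_def nu_min_card_lex_def by auto
  ultimately show ?thesis by (simp add: acyclic_irrefl)
qed

lemma young_arrow_in_nu_min_card_lex: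
  assumes "0 < d" "finite D" "finite D'" "young_arrow d D D'"
  shows "(D, D') \<in> nu_min_card_lex d"
  using assms(4) unfolding young_arrow_def
proof
  assume "\<exists>P. removable D P \<and> D' = D - {P} \<and> nu_min D' d \<noteq> nu_min D d"
  then obtain P where "D' = D - {P}" "nu_min D' d \<noteq> nu_min D d" by blast
  moreover have "nu_min D' d \<le> nu_min D d"
    using nu_min_mono[OF assms(2) _ assms(1)] \<open>D' = D - {P}\<close> by blast
  ultimately show ?thesis unfolding nu_min_card_lex_def by auto
next
  assume "\<exists>P. removable D' P \<and> D = D' - {P} \<and> nu_min D d = nu_min D' d"
  then obtain P where "P \<in> D'" "D = D' - {P}" "nu_min D d = nu_min D' d"
    unfolding removable_def by blast
  moreover have "card (D' - {P}) < card D'" using assms(3) \<open>P \<in> D'\<close> by (rule card_Diff1_less)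
  ultimately show ?thesis unfolding nu_min_card_lex_def by auto
qed

lemma acyclic_young_digraph:
  assumes "0 < d"
  shows "acyclic (young_digraph d)"
proof (rule acyclic_subset[OF acyclic_nu_min_card_lex])
  show "young_digraph d \<subseteq> nu_min_card_lex d"
    unfolding young_digraph_def ferrers_def
    using young_arrow_in_nu_min_card_lex[OF assms] by auto
qed

lemma young_digraph_n_subset: "young_digraph_n d n \<subseteq> young_digraph d"
  unfolding young_digraph_n_def young_digraph_def ferrers_order_def by auto

theorem proposition3p10:
  fixes d :: nat
  assumes "0 < d"
  shows "(\<forall>D. (D, D) \<notin> (young_digraph d)\<^sup>+) \<and>
         (\<forall>n D. (D, D) \<notin> (young_digraph_n d n)\<^sup>+)"
proof -
  have "acyclic (young_digraph d)" using assms by (rule acyclic_young_digraph)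
  moreover have "acyclic (young_digraph_n d n)" for n
    using acyclic_subset[OF \<open>acyclic (young_digraph d)\<close> young_digraph_n_subset] .
  ultimately show ?thesis unfolding acyclic_def by blast
qed

end
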